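(* In the standing setting below, suppose $0\le\rho<\rho_m$ in $\Omega_T$ for a constant $\rho_m>1$, and let $b\ge0$, $e\ge0$ be given continuous functions on $\Omega_T$ with $e$ continuously differentiable in $r$ (twice, as needed for the equation to be classical). Let $n\ge0$ be a classical solution of $$\partial_t n+\frac1r\partial_r(rvn)=\frac1r\partial_r(rD_n\partial_r n)-\frac1r\partial_r\Big(r\,\chi_n\rho\, n\, H(1-n/n_m)\,\Phi(\partial_r e)\Big)+k_{nb}\,b\frac{e}{1+e}+k_n\, n\frac{e}{1+e}-\lambda_{nb}\, n b-\lambda_{nn}n^2$$ in $R(t)<r<L$, $0<t<T$, with boundary conditions $(1-\gamma)n+\gamma L\big(\partial_r n-\frac{\chi_n}{D_n}\rho\, n\,H(1-n/n_m)\Phi(\partial_r e)\big)=0$ at $r=L$, $\partial_r n=0$ at $r=R(t)$, and initial condition $n(r,0)=0$. Here $\gamma\in[0,1]$ and $D_n,\chi_n,n_m,k_{nb},k_n,\lambda_{nb},\lambda_{nn},k_{sg}$ are positive constants. Then, with $$N=\max\Big\{\frac{k_{nb}}{\lambda_{nb}},\ \frac{k_n+\beta(\rho_m-1)}{\lambda_{nn}},\ n_m\Big\},$$ one has $0\le n(r,t)\le N$ in $\Omega_T$.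
   Context: Standing setting. Fix constants $L>0$, $0<R_0<L$, $\beta>0$, $T>0$. Let $R\in C^1([0,T))$ with $R(0)=R_0$ and $0<R(t)<L$, and set $\Omega_T=\{(r,t): R(t)\le r\le L,\ 0\le t<T\}$. Let $\rho\ge 0$ be a classical (continuously differentiable) function on $\Omega_T$ (the matrix density), and define the pressure $P(r,t)=P(\rho(r,t))$ where $P(\rho)=\beta(\rho-1)$ for $\rho\ge1$ and $P(\rho)=0$ for $\rho<1$. Let $v(r,t)$ be a classical function on $\Omega_T$ (twice continuously differentiable in $r$) satisfying $\frac1r\partial_r(r\,\partial_r v)-\frac{v}{r^2}=\partial_r P$ for $R(t)<r<L$, with $v(L,t)=0$, $\partial_r v(R(t),t)=P(R(t),t)$, and the free-boundary law $\dot R(t)=v(R(t),t)$. Define $Q(t)=\int_{R(t)}^L y\,P(y,t)\,dy$. Further notation: $H(u)=\dfrac{u^6}{10^{-6}+u^6}$ for $u\ge0$ and $H(u)=0$ for $u<0$; $\Phi(s)=s/\sqrt{1+k_{sg}s^2}$ with a constant $k_{sg}>0$ (the bounded chemotactic gradient response). *)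

theory Defs
  imports "HOL-Analysis.Analysis"
begin

definition Pfun :: "real \<Rightarrow> real \<Rightarrow> real" where
  "Pfun \<beta> x = (if x \<ge> 1 then \<beta> * (x - 1) else 0)"

definition Hfun :: "real \<Rightarrow> real" where
  "Hfun u = (if u \<ge> 0 then u ^ 6 / (1 / 10 ^ 6 + u ^ 6) else 0)"

definition Phi :: "real \<Rightarrow> real \<Rightarrow> real" where
  "Phi ksg s = s / sqrt (1 + ksg * s ^ 2)"

definition Omega :: "(real \<Rightarrow> real) \<Rightarrow> real \<Rightarrow> real \<Rightarrow> (real \<times> real) set" where
  "Omega R L T = {(r, t). 0 \<le> t \<and> t < T \<and> R t \<le> r \<and> r \<le> L}"

definition Omega_int :: "(real \<Rightarrow> real) \<Rightarrow> real \<Rightarrow> real \<Rightarrow> (real \<times> real) set" where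
  "Omega_int R L T = {(r, t). 0 < t \<and> t < T \<and> R t < r \<and> r < L}"

definition C1_on :: "(real \<times> real) set \<Rightarrow> (real \<Rightarrow> real \<Rightarrow> real) \<Rightarrow>
    (real \<Rightarrow> real \<Rightarrow> real) \<Rightarrow> (real \<Rightarrow> real \<Rightarrow> real) \<Rightarrow> bool" where
  "C1_on S f fr ft \<longleftrightarrow>
     (\<forall>p\<in>S. ((\<lambda>q. f (fst q) (snd q)) has_derivative
                (\<lambda>h. fr (fst p) (snd p) * fst h + ft (fst p) (snd p) * snd h)) (at p within S))
     \<and> continuous_on S (\<lambda>q. fr (fst q) (snd q))
     \<and> continuous_on S (\<lambda>q. ft (fst q) (snd q))"

end

theory Submission
  imports Defs
begin

(* Fix a point (r0,t0) of Omega_T and eps > 0.  On the compact cylinder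
   K = {R(t) <= r <= L, 0 <= t <= t0} consider z = n + delta*(L^2 - (r - m)^2), where m lies
   strictly between max R and L, and delta > 0 is small.  If z reached the level N + eps on K,
   take the first time ts at which it does and a point rs where z(., ts) is maximal.  The
   initial condition n(., 0) = 0 forces ts > 0, and n(rs,ts) > n_m, so the cut-off H vanishes
   near rs.  Then
   - rs = R(ts) is impossible: dn/dr = 0 there while the bump is increasing;
   - rs = L is impossible: the Robin condition forces dn/dr <= 0 while the bump decreases;
   - at an interior rs we have dn/dt >= 0, dn/dr = O(delta), d2n/dr2 <= O(delta), and the PDE
     together with the bound dv/dr + v/r >= -beta(rho_m - 1), obtained by integrating the
     elliptic equation for v, yields dn/dt <= n (k_n + beta(rho_m - 1) - lambda_nn n) + O(delta) < 0.
   Hence n <= z < N + eps on K, and eps -> 0 gives the theorem. *)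

lemma mem_Omega [simp]: "(r, t) \<in> Omega R L T \<longleftrightarrow> 0 \<le> t \<and> t < T \<and> R t \<le> r \<and> r \<le> L"
  by (simp add: Omega_def)

lemma mem_Omega_int [simp]: "(r, t) \<in> Omega_int R L T \<longleftrightarrow> 0 < t \<and> t < T \<and> R t < r \<and> r < L"
  by (simp add: Omega_int_def)

lemma Omega_slice: "0 \<le> t \<Longrightarrow> t < T \<Longrightarrow> {y. (y, t) \<in> Omega R L T} = {R t..L}"
  by auto

lemma C1_on_deriv_r:
  assumes "C1_on S f fr ft" "(r, t) \<in> S"
  shows "((\<lambda>y. f y t) has_real_derivative fr r t) (at r within {y. (y, t) \<in> S})"
proof -
  have df: "\<And>p. p \<in> S \<Longrightarrow> ((\<lambda>q. f (fst q) (snd q)) has_derivative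
      (\<lambda>h. fr (fst p) (snd p) * fst h + ft (fst p) (snd p) * snd h)) (at p within S)"
    using assms(1) unfolding C1_on_def by blast
  have line: "((\<lambda>y. (y, t)) has_derivative (\<lambda>h. (h, 0))) (at r within {y. (y, t) \<in> S})"
    by (auto intro!: derivative_eq_intros)
  have "((\<lambda>y. f y t) has_derivative (\<lambda>h. fr r t * h)) (at r within {y. (y, t) \<in> S})"
    using has_derivative_in_compose2[OF df _ _ line] assms(2) by auto
  then show ?thesis by (simp add: has_field_derivative_def)
qed

lemma C1_on_deriv_t:
  assumes "C1_on S f fr ft" "(r, t) \<in> S"
  shows "((\<lambda>s. f r s) has_real_derivative ft r t) (at t within {s. (r, s) \<in> S})"
proof -
  have df: "\<And>p. p \<in> S \<Longrightarrow> ((\<lambda>q. f (fst q) (snd q)) has_derivative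
      (\<lambda>h. fr (fst p) (snd p) * fst h + ft (fst p) (snd p) * snd h)) (at p within S)"
    using assms(1) unfolding C1_on_def by blast
  have line: "((\<lambda>s. (r, s)) has_derivative (\<lambda>h. (0, h))) (at t within {s. (r, s) \<in> S})"
    by (auto intro!: derivative_eq_intros)
  have "((\<lambda>s. f r s) has_derivative (\<lambda>h. ft r t * h)) (at t within {s. (r, s) \<in> S})"
    using has_derivative_in_compose2[OF df _ _ line] assms(2) by auto
  then show ?thesis by (simp add: has_field_derivative_def)
qed

lemma C1_on_continuous: "C1_on S f fr ft \<Longrightarrow> continuous_on S (\<lambda>q. f (fst q) (snd q))"
  unfolding C1_on_def continuous_on_eq_continuous_within using has_derivative_continuous by blast

lemma continuous_on_slice:
  assumes "continuous_on S (\<lambda>q. f (fst q) (snd q))"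
  shows "continuous_on {y. (y, t) \<in> S} (\<lambda>y. f y t)"
proof -
  have "(\<lambda>y. (y, t)) ` {y. (y, t) \<in> S} \<subseteq> S" by auto
  then show ?thesis
    using continuous_on_compose2[OF assms continuous_on_Pair[OF continuous_on_id continuous_on_const]]
    by auto
qed

lemma Pfun_continuous_on: "continuous_on S f \<Longrightarrow> continuous_on S (\<lambda>y. Pfun \<beta> (f y))"
proof -
  have "Pfun \<beta> x = \<beta> * max (x - 1) 0" for x by (simp add: Pfun_def max_def)
  then show "continuous_on S f \<Longrightarrow> ?thesis" by (simp only:) (intro continuous_intros)
qed

lemma Pfun_bounds: "0 \<le> \<beta> \<Longrightarrow> 1 \<le> \<rho>m \<Longrightarrow> x < \<rho>m \<Longrightarrow> 0 \<le> Pfun \<beta> x \<and> Pfun \<beta> x \<le> \<beta> * (\<rho>m - 1)"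
  unfolding Pfun_def by (auto intro: mult_left_mono)

lemma Hfun_above_threshold: "0 < nm \<Longrightarrow> nm < x \<Longrightarrow> Hfun (1 - x / nm) = 0"
  by (simp add: Hfun_def)

section \<open>One-variable calculus at a maximum\<close>

lemma deriv_nonpos_at_left_max:
  fixes f :: "real \<Rightarrow> real"
  assumes df: "(f has_real_derivative D) (at x within S)" and "0 < d"
    and right: "\<And>h. 0 < h \<Longrightarrow> h < d \<Longrightarrow> x + h \<in> S \<and> f (x + h) \<le> f x"
  shows "D \<le> 0"
proof (rule ccontr)
  assume "\<not> D \<le> 0"
  then obtain d' where "0 < d'" and inc: "\<And>h. 0 < h \<Longrightarrow> x + h \<in> S \<Longrightarrow> h < d' \<Longrightarrow> f x < f (x + h)"
    using has_real_derivative_pos_inc_right[OF df] by force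
  define h where "h = min d d' / 2"
  have "0 < h" "h < d" "h < d'" unfolding h_def using \<open>0 < d\<close> \<open>0 < d'\<close> by auto
  then show False using inc[of h] right[of h] by fastforce
qed

lemma deriv_nonneg_at_right_max:
  fixes f :: "real \<Rightarrow> real"
  assumes df: "(f has_real_derivative D) (at x within S)" and "0 < d"
    and left: "\<And>h. 0 < h \<Longrightarrow> h < d \<Longrightarrow> x - h \<in> S \<and> f (x - h) \<le> f x"
  shows "0 \<le> D"
proof (rule ccontr)
  assume "\<not> 0 \<le> D"
  then obtain d' where "0 < d'" and dec: "\<And>h. 0 < h \<Longrightarrow> x - h \<in> S \<Longrightarrow> h < d' \<Longrightarrow> f x < f (x - h)"
    using has_real_derivative_neg_dec_left[OF df] by force
  define h where "h = min d d' / 2"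
  have "0 < h" "h < d" "h < d'" unfolding h_def using \<open>0 < d\<close> \<open>0 < d'\<close> by auto
  then show False using dec[of h] left[of h] by fastforce
qed

lemma interior_max_second_deriv:
  fixes f f' :: "real \<Rightarrow> real"
  assumes x: "a < x" "x < b"
    and df: "\<And>y. a < y \<Longrightarrow> y < b \<Longrightarrow> (f has_real_derivative f' y) (at y)"
    and df': "(f' has_real_derivative l) (at x)" and crit: "f' x = 0"
    and max: "\<And>y. a < y \<Longrightarrow> y < b \<Longrightarrow> f y \<le> f x"
  shows "l \<le> 0"
proof (rule ccontr)
  assume "\<not> l \<le> 0"
  then obtain d where "0 < d" and pos: "\<And>h. 0 < h \<Longrightarrow> h < d \<Longrightarrow> 0 < f' (x + h)"
    using DERIV_pos_inc_right[OF df'] crit by force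
  define c where "c = min (x + d / 2) ((x + b) / 2)"
  have c: "x < c" "c < b" "c - x < d" unfolding c_def using x \<open>0 < d\<close> by (auto simp: min_def)
  have "f x < f c"
  proof (rule DERIV_pos_imp_increasing_open[OF \<open>x < c\<close>])
    fix y assume "x < y" "y < c"
    then show "\<exists>D. (f has_real_derivative D) (at y) \<and> 0 < D"
      using df[of y] pos[of "y - x"] c x by auto
  next
    show "continuous_on {x..c} f"
    proof (intro continuous_at_imp_continuous_on ballI)
      fix y assume "y \<in> {x..c}"
      then show "isCont f y" using df[of y] c x by (auto intro: DERIV_isCont)
    qed
  qed
  then show False using max[of c] c x by simp
qed

section \<open>The elliptic equation for the velocity\<close>

text \<open>The equation vrr + vr/r - v/r^2 = P' says (vr + v/r)' = P', so vr + v/r - P is constant;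
  the Neumann condition vr(a) = P(a) identifies the constant as v(a)/a.\<close>

lemma radial_first_integral:
  fixes v vr vrr P Pr :: "real \<Rightarrow> real"
  assumes ab: "0 < a" "a < b"
    and cont: "continuous_on {a..b} v" "continuous_on {a..b} vr" "continuous_on {a..b} P"
    and dv: "\<And>y. a < y \<Longrightarrow> y < b \<Longrightarrow> (v has_real_derivative vr y) (at y)"
    and dvr: "\<And>y. a < y \<Longrightarrow> y < b \<Longrightarrow> (vr has_real_derivative vrr y) (at y)"
    and dP: "\<And>y. a < y \<Longrightarrow> y < b \<Longrightarrow> (P has_real_derivative Pr y) (at y)"
    and eq: "\<And>y. a < y \<Longrightarrow> y < b \<Longrightarrow> vrr y + vr y / y - v y / y^2 = Pr y"
    and bc: "vr a = P a"
    and y: "a \<le> y" "y \<le> b"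
  shows "vr y + v y / y = P y + v a / a"
proof -
  define w where "w y = vr y + v y / y - P y" for y
  have "w y = w a"
  proof (rule DERIV_isconst2[OF \<open>a < b\<close> _ _ y])
    show "continuous_on {a..b} w"
      unfolding w_def using ab by (intro continuous_intros cont) auto
    fix x assume x: "a < x" "x < b"
    then have dw: "(w has_real_derivative vrr x + (vr x * x - v x) / x^2 - Pr x) (at x)"
      unfolding w_def using ab
      by (auto intro!: derivative_eq_intros dv dvr dP simp: power2_eq_square)
    have "(vr x * x - v x) / x^2 = vr x / x - v x / x^2"
      using x ab by (simp add: field_simps power2_eq_square)
    then have "vrr x + (vr x * x - v x) / x^2 - Pr x = 0" using eq[OF x] by linarith
    then show "(w has_real_derivative 0) (at x)" using dw by simp
  qed
  then show ?thesis using bc unfolding w_def by simp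
qed

text \<open>With v(b) = 0 and 0 \<le> P \<le> B the first integral is bounded below by -B: if the constant
  c = v(a)/a were below -B, then (x v)' = x (P + c) < 0 would force a v(a) > b v(b) = 0, whereas
  a v(a) = c a^2 < 0.\<close>

lemma radial_velocity_lower_bound:
  fixes v vr vrr P Pr :: "real \<Rightarrow> real"
  assumes ab: "0 < a" "a < b"
    and cont: "continuous_on {a..b} v" "continuous_on {a..b} vr" "continuous_on {a..b} P"
    and dv: "\<And>y. a < y \<Longrightarrow> y < b \<Longrightarrow> (v has_real_derivative vr y) (at y)"
    and dvr: "\<And>y. a < y \<Longrightarrow> y < b \<Longrightarrow> (vr has_real_derivative vrr y) (at y)"
    and dP: "\<And>y. a < y \<Longrightarrow> y < b \<Longrightarrow> (P has_real_derivative Pr y) (at y)"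
    and eq: "\<And>y. a < y \<Longrightarrow> y < b \<Longrightarrow> vrr y + vr y / y - v y / y^2 = Pr y"
    and bc: "vr a = P a" "v b = 0"
    and P: "\<And>y. a \<le> y \<Longrightarrow> y \<le> b \<Longrightarrow> 0 \<le> P y \<and> P y \<le> B"
    and y: "a \<le> y" "y \<le> b"
  shows "- B \<le> vr y + v y / y"
proof -
  define c where "c = v a / a"
  have first_integral: "vr x + v x / x = P x + c" if "a \<le> x" "x \<le> b" for x
    using radial_first_integral[OF ab cont dv dvr dP eq bc(1) that] unfolding c_def .
  have "- B \<le> c"
  proof (rule ccontr)
    assume "\<not> - B \<le> c"
    have "b * v b < a * v a"
    proof (rule DERIV_neg_imp_decreasing_open[OF \<open>a < b\<close>])
      show "continuous_on {a..b} (\<lambda>x. x * v x)" by (intro continuous_intros cont)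
      fix x assume x: "a < x" "x < b"
      have "((\<lambda>x. x * v x) has_real_derivative v x + x * vr x) (at x)"
        by (auto intro!: derivative_eq_intros dv x)
      moreover have "v x + x * vr x = x * (P x + c)"
        using first_integral[of x] x ab by (simp add: field_simps)
      moreover have "x * (P x + c) < 0"
        using P[of x] x ab \<open>\<not> - B \<le> c\<close> by (simp add: mult_pos_neg)
      ultimately show "\<exists>D. ((\<lambda>x. x * v x) has_real_derivative D) (at x) \<and> D < 0" by auto
    qed
    moreover have "a * v a = c * a^2" using ab unfolding c_def by (simp add: power2_eq_square)
    moreover have "c * a^2 < 0"
      using P[of a] ab \<open>\<not> - B \<le> c\<close> by (intro mult_neg_pos) auto
    ultimately show False using bc(2) by simp
  qed
  then show ?thesis using first_integral[OF y] P[OF y] by linarith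
qed

definition cylinder :: "(real \<Rightarrow> real) \<Rightarrow> real \<Rightarrow> real \<Rightarrow> (real \<times> real) set" where
  "cylinder R L t1 = {(r, t). 0 \<le> t \<and> t \<le> t1 \<and> R t \<le> r \<and> r \<le> L}"

lemma mem_cylinder [simp]: "(r, t) \<in> cylinder R L t1 \<longleftrightarrow> 0 \<le> t \<and> t \<le> t1 \<and> R t \<le> r \<and> r \<le> L"
  by (simp add: cylinder_def)

text \<open>A cylinder with continuous inner boundary is a closed subset of a rectangle.\<close>

lemma compact_cylinder:
  assumes R: "continuous_on {0..t1} R"
  shows "compact (cylinder R L t1)"
proof -
  obtain a where a: "\<forall>t\<in>{0..t1}. \<bar>R t\<bar> \<le> a"
    using compact_imp_bounded[OF compact_continuous_image[OF R compact_Icc]]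
    unfolding bounded_real by auto
  have "- a \<le> r" if "0 \<le> t" "t \<le> t1" "R t \<le> r" for r t
  proof -
    have "\<bar>R t\<bar> \<le> a" using a that by simp
    then show ?thesis using that by linarith
  qed
  then have eq: "cylinder R L t1 = ({-a..L} \<times> {0..t1}) \<inter> (\<lambda>q. R (snd q) - fst q) -` {..0}"
    by (auto simp: cylinder_def)
  have "continuous_on ({-a..L} \<times> {0..t1}) (\<lambda>q. R (snd q) - fst q)"
    by (intro continuous_intros continuous_on_compose2[OF R continuous_on_snd]) auto
  then have "closed (({-a..L} \<times> {0..t1}) \<inter> (\<lambda>q. R (snd q) - fst q) -` {..0})"
    by (rule continuous_closed_preimage) (auto intro: closed_Times)
  from compact_Int_closed[OF compact_Times[OF compact_Icc[of "-a" L] compact_Icc[of 0 t1]] this]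
  show ?thesis unfolding eq by (simp add: Int_left_absorb)
qed

lemma bounded_on_cylinder:
  fixes f :: "real \<Rightarrow> real \<Rightarrow> real" and R :: "real \<Rightarrow> real"
  assumes R: "continuous_on {0..t1} R" and f: "continuous_on (cylinder R L t1) (\<lambda>q. f (fst q) (snd q))"
  obtains V where "0 < V" "\<And>r s. (r, s) \<in> cylinder R L t1 \<Longrightarrow> \<bar>f r s\<bar> \<le> V"
proof -
  have "bounded ((\<lambda>q. f (fst q) (snd q)) ` cylinder R L t1)"
    by (intro compact_imp_bounded compact_continuous_image compact_cylinder[OF R] f)
  then obtain V where "0 < V" and V: "\<forall>x \<in> (\<lambda>q. f (fst q) (snd q)) ` cylinder R L t1. norm x \<le> V"
    unfolding bounded_pos by blast
  have "\<bar>f r s\<bar> \<le> V" if "(r, s) \<in> cylinder R L t1" for r s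
  proof -
    have "f r s \<in> (\<lambda>q. f (fst q) (snd q)) ` cylinder R L t1"
      by (rule image_eqI[where x = "(r, s)"]) (use that in auto)
    then show ?thesis using V by auto
  qed
  then show thesis using that \<open>0 < V\<close> by blast
qed

lemma first_time_at_level:
  fixes z :: "real \<Rightarrow> real \<Rightarrow> real"
  assumes K: "compact K" and z: "continuous_on K (\<lambda>q. z (fst q) (snd q))"
    and q0: "(r0, t0) \<in> K" "M \<le> z r0 t0"
  obtains r1 ts where "(r1, ts) \<in> K" "M \<le> z r1 ts" "\<And>r s. (r, s) \<in> K \<Longrightarrow> s < ts \<Longrightarrow> z r s < M"
proof -
  define A where "A = K \<inter> (\<lambda>q. z (fst q) (snd q)) -` {M..}"
  have "closed A"
    unfolding A_def by (rule continuous_closed_preimage[OF z compact_imp_closed[OF K]]) auto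
  moreover have "K \<inter> A = A" unfolding A_def by auto
  ultimately have "compact A" using compact_Int_closed[OF K] by metis
  moreover have "(r0, t0) \<in> A" using q0 unfolding A_def by simp
  ultimately obtain q where q: "q \<in> A" and first: "\<forall>p\<in>A. snd q \<le> snd p"
    using continuous_attains_inf[OF _ _ continuous_on_snd[OF continuous_on_id]] by (metis empty_iff)
  show thesis
  proof (rule that[of "fst q" "snd q"])
    show "(fst q, snd q) \<in> K" "M \<le> z (fst q) (snd q)" using q by (auto simp: A_def)
    fix r s assume "(r, s) \<in> K" "s < snd q"
    then have "(r, s) \<notin> A" using first by fastforce
    then show "z r s < M" using \<open>(r, s) \<in> K\<close> by (auto simp: A_def)
  qed
qed

lemma right_of_boundary_earlier:
  fixes R :: "real \<Rightarrow> real"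
  assumes R: "continuous_on {0..t1} R" and ts: "0 < ts" "ts \<le> t1" and r: "R ts < r"
  obtains d where "0 < d" "\<And>h. 0 < h \<Longrightarrow> h < d \<Longrightarrow> 0 \<le> ts - h \<and> R (ts - h) < r"
proof -
  have "\<forall>e>0. \<exists>d>0. \<forall>s\<in>{0..t1}. dist s ts < d \<longrightarrow> dist (R s) (R ts) < e"
    using R ts unfolding continuous_on_iff by auto
  then obtain e where "0 < e" and e: "\<And>s. s \<in> {0..t1} \<Longrightarrow> dist s ts < e \<Longrightarrow> dist (R s) (R ts) < r - R ts"
    using r by (meson diff_gt_0_iff_gt)
  show thesis
  proof (rule that[of "min e ts"])
    fix h assume h: "0 < h" "h < min e ts"
    then have "dist (R (ts - h)) (R ts) < r - R ts" using e[of "ts - h"] ts by (simp add: dist_real_def)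
    then show "0 \<le> ts - h \<and> R (ts - h) < r" using h by (auto simp: dist_real_def)
  qed (use \<open>0 < e\<close> ts in auto)
qed

lemma boundary_margins:
  fixes R :: "real \<Rightarrow> real"
  assumes R: "continuous_on {0..t1} R" and "0 \<le> t1"
    and bounds: "\<And>t. 0 \<le> t \<Longrightarrow> t \<le> t1 \<Longrightarrow> 0 < R t \<and> R t < L"
  obtains Rmin m where "0 < Rmin" "m < L" "\<And>t. 0 \<le> t \<Longrightarrow> t \<le> t1 \<Longrightarrow> Rmin \<le> R t \<and> R t < m"
proof -
  obtain tmin where tmin: "tmin \<in> {0..t1}" "\<forall>s\<in>{0..t1}. R tmin \<le> R s"
    using continuous_attains_inf[OF compact_Icc _ R] \<open>0 \<le> t1\<close> by auto
  obtain tmax where tmax: "tmax \<in> {0..t1}" "\<forall>s\<in>{0..t1}. R s \<le> R tmax"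
    using continuous_attains_sup[OF compact_Icc _ R] \<open>0 \<le> t1\<close> by auto
  show thesis
  proof (rule that)
    show "0 < R tmin" "(R tmax + L) / 2 < L" using tmin(1) tmax(1) bounds by auto
    fix t assume "0 \<le> t" "t \<le> t1"
    then have "R tmin \<le> R t" "R t \<le> R tmax" using tmin(2) tmax(2) by auto
    then show "R tmin \<le> R t \<and> R t < (R tmax + L) / 2" using tmax(1) bounds[of tmax] by auto
  qed
qed

definition bump :: "real \<Rightarrow> real \<Rightarrow> real \<Rightarrow> real" where
  "bump L m y = L^2 - (y - m)^2"

lemma bump_deriv: "(bump L m has_real_derivative 2 * (m - y)) (at y within S)"
  unfolding bump_def by (auto intro!: derivative_eq_intros)

lemma bump_bounds:
  assumes "0 \<le> m" "m \<le> L" "0 \<le> y" "y \<le> L"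
  shows "0 \<le> bump L m y \<and> bump L m y \<le> L^2"
proof -
  have "\<bar>y - m\<bar> \<le> \<bar>L\<bar>" using assms by auto
  then show ?thesis unfolding bump_def by (simp add: abs_le_square_iff)
qed

lemma small_factor:
  fixes A C a c :: real
  assumes "0 < A" "0 < C" "0 < a" "0 < c"
  obtains \<delta> where "0 < \<delta>" "\<delta> * A \<le> a" "\<delta> * C < c"
proof
  define \<delta> where "\<delta> = min (a / A) (c / (2 * C))"
  show "0 < \<delta>" unfolding \<delta>_def using assms by simp
  have "\<delta> * A \<le> a / A * A" unfolding \<delta>_def using assms by (intro mult_right_mono) auto
  then show "\<delta> * A \<le> a" using assms by simp
  have "\<delta> * C \<le> c / (2 * C) * C" unfolding \<delta>_def using assms by (intro mult_right_mono) auto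
  then show "\<delta> * C < c" using assms by simp
qed

locale density_problem =
  fixes L T \<beta> \<rho>m \<gamma> Dn \<chi>n nm knb kn lamnb lamnn ksg :: real
    and R :: "real \<Rightarrow> real"
    and \<rho> v vr vrr Pr b e er n nr nt nrr Fr :: "real \<Rightarrow> real \<Rightarrow> real"
  assumes L_pos: "0 < L"
    and R_bounds: "\<And>t. 0 \<le> t \<Longrightarrow> t < T \<Longrightarrow> 0 < R t \<and> R t < L"
    and R_cont: "continuous_on {0..<T} R"
    and \<beta>_nonneg: "0 \<le> \<beta>" and \<rho>m_ge: "1 \<le> \<rho>m"
    and \<rho>_cont: "continuous_on (Omega R L T) (\<lambda>q. \<rho> (fst q) (snd q))"
    and \<rho>_below: "\<And>r t. (r, t) \<in> Omega R L T \<Longrightarrow> \<rho> r t < \<rho>m"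
    and v_cont: "continuous_on (Omega R L T) (\<lambda>q. v (fst q) (snd q))"
    and vr_cont: "continuous_on (Omega R L T) (\<lambda>q. vr (fst q) (snd q))"
    and v_r: "\<And>r t. (r, t) \<in> Omega R L T \<Longrightarrow>
        ((\<lambda>y. v y t) has_real_derivative vr r t) (at r within {R t..L})"
    and v_rr: "\<And>r t. (r, t) \<in> Omega R L T \<Longrightarrow>
        ((\<lambda>y. vr y t) has_real_derivative vrr r t) (at r within {R t..L})"
    and P_r: "\<And>r t. 0 \<le> t \<Longrightarrow> t < T \<Longrightarrow> R t < r \<Longrightarrow> r < L \<Longrightarrow>
        ((\<lambda>y. Pfun \<beta> (\<rho> y t)) has_real_derivative Pr r t) (at r)"
    and v_eq: "\<And>r t. 0 \<le> t \<Longrightarrow> t < T \<Longrightarrow> R t < r \<Longrightarrow> r < L \<Longrightarrow>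
        vrr r t + vr r t / r - v r t / r ^ 2 = Pr r t"
    and v_bc_L: "\<And>t. 0 \<le> t \<Longrightarrow> t < T \<Longrightarrow> v L t = 0"
    and v_bc_R: "\<And>t. 0 \<le> t \<Longrightarrow> t < T \<Longrightarrow> vr (R t) t = Pfun \<beta> (\<rho> (R t) t)"
    and b_nonneg: "\<And>r t. (r, t) \<in> Omega R L T \<Longrightarrow> 0 \<le> b r t"
    and e_nonneg: "\<And>r t. (r, t) \<in> Omega R L T \<Longrightarrow> 0 \<le> e r t"
    and \<gamma>_range: "0 \<le> \<gamma>" "\<gamma> \<le> 1"
    and Dn_pos: "0 < Dn" and nm_pos: "0 < nm" and knb_nonneg: "0 \<le> knb" and kn_nonneg: "0 \<le> kn"
    and lamnb_pos: "0 < lamnb" and lamnn_pos: "0 < lamnn"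
    and n_C1: "C1_on (Omega R L T) n nr nt"
    and n_rr: "\<And>r t. (r, t) \<in> Omega_int R L T \<Longrightarrow>
        ((\<lambda>y. nr y t) has_real_derivative nrr r t) (at r)"
    and flux_r: "\<And>r t. (r, t) \<in> Omega_int R L T \<Longrightarrow>
        ((\<lambda>y. y * v y t * n y t - y * Dn * nr y t
              + y * \<chi>n * \<rho> y t * n y t * Hfun (1 - n y t / nm) * Phi ksg (er y t))
           has_real_derivative Fr r t) (at r)"
    and n_pde: "\<And>r t. (r, t) \<in> Omega_int R L T \<Longrightarrow>
        nt r t + Fr r t / r
          = knb * b r t * (e r t / (1 + e r t)) + kn * n r t * (e r t / (1 + e r t))
            - lamnb * n r t * b r t - lamnn * (n r t) ^ 2"
    and n_bc_L: "\<And>t. 0 < t \<Longrightarrow> t < T \<Longrightarrow>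
        (1 - \<gamma>) * n L t + \<gamma> * L * (nr L t
           - \<chi>n / Dn * \<rho> L t * n L t * Hfun (1 - n L t / nm) * Phi ksg (er L t)) = 0"
    and n_bc_R: "\<And>t. 0 < t \<Longrightarrow> t < T \<Longrightarrow> nr (R t) t = 0"
    and n_init: "\<And>r. R 0 \<le> r \<Longrightarrow> r \<le> L \<Longrightarrow> n r 0 = 0"
begin

definition bound :: real where
  "bound = max (knb / lamnb) (max ((kn + \<beta> * (\<rho>m - 1)) / lamnn) nm)"

lemma bound_ge: "knb / lamnb \<le> bound" "(kn + \<beta> * (\<rho>m - 1)) / lamnn \<le> bound" "nm \<le> bound"
  unfolding bound_def by auto

lemma R_cont_upto: "0 \<le> t1 \<Longrightarrow> t1 < T \<Longrightarrow> continuous_on {0..t1} R"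
  by (rule continuous_on_subset[OF R_cont]) auto

lemma at_interior: "R t < y \<Longrightarrow> y < L \<Longrightarrow> at y within {R t..L} = at y"
  by (rule at_within_Icc_at)

lemma n_deriv_r:
  "0 \<le> t \<Longrightarrow> t < T \<Longrightarrow> R t \<le> y \<Longrightarrow> y \<le> L \<Longrightarrow>
    ((\<lambda>y. n y t) has_real_derivative nr y t) (at y within {R t..L})"
  using C1_on_deriv_r[OF n_C1, of y t] Omega_slice[of t T R L] by simp

lemma velocity_lower_bound:
  assumes t: "0 \<le> t" "t < T" and y: "R t < y" "y < L"
  shows "- (\<beta> * (\<rho>m - 1)) \<le> vr y t + v y t / y"
proof (rule radial_velocity_lower_bound[where vrr = "\<lambda>y. vrr y t" and P = "\<lambda>y. Pfun \<beta> (\<rho> y t)"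
      and Pr = "\<lambda>y. Pr y t"])
  have slice: "{y. (y, t) \<in> Omega R L T} = {R t..L}" using Omega_slice[OF t] .
  show "0 < R t" "R t < L" using R_bounds[OF t] by auto
  show "continuous_on {R t..L} (\<lambda>y. v y t)" "continuous_on {R t..L} (\<lambda>y. vr y t)"
    using continuous_on_slice[OF v_cont, of t] continuous_on_slice[OF vr_cont, of t] slice by auto
  show "continuous_on {R t..L} (\<lambda>y. Pfun \<beta> (\<rho> y t))"
    using Pfun_continuous_on[OF continuous_on_slice[OF \<rho>_cont, of t]] slice by simp
  show "vr (R t) t = Pfun \<beta> (\<rho> (R t) t)" "v L t = 0" using v_bc_R[OF t] v_bc_L[OF t] .
  show "R t \<le> y" "y \<le> L" using y by auto
next
  fix x assume x: "R t < x" "x < L"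
  show "((\<lambda>y. v y t) has_real_derivative vr x t) (at x)"
    "((\<lambda>y. vr y t) has_real_derivative vrr x t) (at x)"
    using v_r[of x t] v_rr[of x t] x t at_interior[OF x] by auto
  show "((\<lambda>y. Pfun \<beta> (\<rho> y t)) has_real_derivative Pr x t) (at x)" using P_r[OF t x] .
  show "vrr x t + vr x t / x - v x t / x^2 = Pr x t" using v_eq[OF t x] .
next
  fix x assume "R t \<le> x" "x \<le> L"
  then show "0 \<le> Pfun \<beta> (\<rho> x t) \<and> Pfun \<beta> (\<rho> x t) \<le> \<beta> * (\<rho>m - 1)"
    using Pfun_bounds[OF \<beta>_nonneg \<rho>m_ge \<rho>_below] t by simp
qed

text \<open>Where n exceeds nm the taxis term vanishes on a neighbourhood, so the flux derivative Fr
  only involves convection and diffusion.\<close>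

lemma flux_above_threshold:
  assumes rt: "(r, t) \<in> Omega_int R L T" and above: "nm < n r t"
  shows "Fr r t = v r t * n r t + r * vr r t * n r t + r * v r t * nr r t
      - Dn * nr r t - r * Dn * nrr r t"
proof -
  have t: "0 \<le> t" "t < T" and r: "R t < r" "r < L" using rt by auto
  define U where "U = {R t<..<L} \<inter> (\<lambda>y. n y t) -` {nm<..}"
  have "continuous_on {R t..L} (\<lambda>y. n y t)"
    using continuous_on_slice[OF C1_on_continuous[OF n_C1], of t] Omega_slice[OF t] by simp
  then have U: "open U"
    unfolding U_def by (rule continuous_open_preimage[OF continuous_on_subset]) auto
  have rU: "r \<in> U" using r above unfolding U_def by auto
  have conv_diff: "((\<lambda>y. y * v y t * n y t - y * Dn * nr y t) has_real_derivative
      v r t * n r t + r * vr r t * n r t + r * v r t * nr r t - Dn * nr r t - r * Dn * nrr r t) (at r)"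
    using v_r[of r t] n_deriv_r[OF t, of r] n_rr[OF rt] r t at_interior[OF r]
    by (auto intro!: derivative_eq_intros simp: algebra_simps)
  have "((\<lambda>y. y * v y t * n y t - y * Dn * nr y t
        + y * \<chi>n * \<rho> y t * n y t * Hfun (1 - n y t / nm) * Phi ksg (er y t)) has_real_derivative
      v r t * n r t + r * vr r t * n r t + r * v r t * nr r t - Dn * nr r t - r * Dn * nrr r t) (at r)"
    by (rule has_field_derivative_transform_within_open[OF conv_diff U rU])
      (auto simp: U_def Hfun_above_threshold[OF nm_pos])
  then show ?thesis using flux_r[OF rt] DERIV_unique by blast
qed

lemma nt_estimate:
  assumes rt: "(r, t) \<in> Omega_int R L T" and above: "nm < n r t" "knb / lamnb \<le> n r t"
  shows "nt r t \<le> n r t * (kn + \<beta> * (\<rho>m - 1) - lamnn * n r t)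
      + \<bar>v r t\<bar> * \<bar>nr r t\<bar> + Dn * \<bar>nr r t\<bar> / r + Dn * nrr r t"
proof -
  have t: "0 \<le> t" "t < T" and r: "R t < r" "r < L" and r0: "0 < r"
    using rt R_bounds[of t] by auto
  have rtO: "(r, t) \<in> Omega R L T" using rt by auto
  define N E where "N = n r t" and "E = e r t / (1 + e r t)"
  have N0: "0 < N" using above nm_pos unfolding N_def by linarith
  have E: "0 \<le> E" "E \<le> 1" using e_nonneg[OF rtO] unfolding E_def by auto
  have "knb * b r t * E \<le> knb * b r t"
    using E b_nonneg[OF rtO] knb_nonneg by (simp add: mult_left_le)
  also have "\<dots> \<le> lamnb * N * b r t"
  proof (rule mult_right_mono)
    show "knb \<le> lamnb * N" using above(2) lamnb_pos unfolding N_def by (simp add: field_simps)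
  qed (rule b_nonneg[OF rtO])
  finally have birth: "knb * b r t * E \<le> lamnb * N * b r t" .
  have prolif: "kn * N * E \<le> kn * N" using E N0 kn_nonneg by (simp add: mult_left_le)
  have conv: "- (N * (vr r t + v r t / r)) \<le> N * (\<beta> * (\<rho>m - 1))"
    using mult_left_mono[OF velocity_lower_bound[OF t r] less_imp_le[OF N0]] by simp
  have "- (v r t * nr r t) \<le> \<bar>v r t\<bar> * \<bar>nr r t\<bar>" by (simp add: abs_mult[symmetric])
  moreover have "Dn * nr r t / r \<le> Dn * \<bar>nr r t\<bar> / r"
    using Dn_pos r0 by (simp add: divide_right_mono)
  moreover have "Fr r t / r = N * (vr r t + v r t / r) + v r t * nr r t - Dn * nr r t / r - Dn * nrr r t"
    unfolding flux_above_threshold[OF rt above(1)] N_def using r0 by (simp add: field_simps)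
  moreover have "nt r t + Fr r t / r = knb * b r t * E + kn * N * E - lamnb * N * b r t - lamnn * N^2"
    using n_pde[OF rt] unfolding N_def E_def .
  ultimately show ?thesis
    using birth prolif conv unfolding N_def[symmetric] by (simp add: algebra_simps power2_eq_square)
qed

end

context density_problem
begin

definition perturbed :: "real \<Rightarrow> real \<Rightarrow> real \<Rightarrow> real \<Rightarrow> real" where
  "perturbed \<delta> m y t = n y t + \<delta> * bump L m y"

lemma perturbed_deriv:
  "0 \<le> t \<Longrightarrow> t < T \<Longrightarrow> R t \<le> y \<Longrightarrow> y \<le> L \<Longrightarrow>
    ((\<lambda>y. perturbed \<delta> m y t) has_real_derivative nr y t + \<delta> * (2 * (m - y))) (at y within {R t..L})"
  unfolding perturbed_def by (intro DERIV_add DERIV_cmult n_deriv_r bump_deriv)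

text \<open>The Neumann condition at the free boundary rules out a maximum of the perturbation
  there, because the bump is increasing to the left of m.\<close>

lemma no_max_at_inner_boundary:
  assumes t: "0 < t" "t < T" and "0 < \<delta>" "R t < m"
    and max: "\<And>y. R t \<le> y \<Longrightarrow> y \<le> L \<Longrightarrow> perturbed \<delta> m y t \<le> perturbed \<delta> m (R t) t"
  shows False
proof -
  have RL: "R t < L" using R_bounds[of t] t by auto
  have "nr (R t) t + \<delta> * (2 * (m - R t)) \<le> 0"
    by (rule deriv_nonpos_at_left_max[OF perturbed_deriv, of _ _ "L - R t"]) (use t RL max in auto)
  moreover have "0 < \<delta> * (2 * (m - R t))" using assms by simp
  ultimately show False using n_bc_R[OF t] by simp
qed

text \<open>Above nm the Robin condition at r = L reads (1 - gamma) n + gamma L dn/dr = 0, forcing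
  dn/dr \<le> 0; this rules out a maximum there, because the bump is decreasing right of m.\<close>

lemma no_max_at_outer_boundary:
  assumes t: "0 < t" "t < T" and "0 < \<delta>" "m < L" and above: "nm < n L t"
    and max: "\<And>y. R t \<le> y \<Longrightarrow> y \<le> L \<Longrightarrow> perturbed \<delta> m y t \<le> perturbed \<delta> m L t"
  shows False
proof -
  have RL: "R t < L" using R_bounds[of t] t by auto
  have "0 \<le> nr L t + \<delta> * (2 * (m - L))"
    by (rule deriv_nonneg_at_right_max[OF perturbed_deriv, of _ _ "L - R t"]) (use t RL max in auto)
  moreover have "\<delta> * (2 * (m - L)) < 0" using assms by (simp add: mult_pos_neg)
  ultimately have slope: "0 < nr L t" by linarith
  have robin: "(1 - \<gamma>) * n L t + \<gamma> * L * nr L t = 0"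
    using n_bc_L[OF t] Hfun_above_threshold[OF nm_pos above] by simp
  have "0 < n L t" using above nm_pos by linarith
  show False
  proof (cases "\<gamma> = 0")
    case True
    then show False using robin \<open>0 < n L t\<close> by simp
  next
    case False
    then have "0 < \<gamma> * L * nr L t" using \<gamma>_range L_pos slope by simp
    moreover have "0 \<le> (1 - \<gamma>) * n L t" using \<gamma>_range \<open>0 < n L t\<close> by simp
    ultimately show False using robin by linarith
  qed
qed

lemma interior_max_derivatives:
  assumes rt: "(r, t) \<in> Omega_int R L T" and "0 < \<delta>"
    and max: "\<And>y. R t \<le> y \<Longrightarrow> y \<le> L \<Longrightarrow> perturbed \<delta> m y t \<le> perturbed \<delta> m r t"
    and "0 < d" and earlier: "\<And>h. 0 < h \<Longrightarrow> h < d \<Longrightarrow> (r, t - h) \<in> Omega R L T \<and> n r (t - h) \<le> n r t"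
  shows "0 \<le> nt r t" "nr r t = 2 * \<delta> * (r - m)" "nrr r t \<le> 2 * \<delta>"
proof -
  have t: "0 \<le> t" "t < T" and r: "R t < r" "r < L" using rt by auto
  show "0 \<le> nt r t"
    using deriv_nonneg_at_right_max[OF C1_on_deriv_t[OF n_C1] \<open>0 < d\<close>] earlier rt by auto
  have dz: "((\<lambda>y. perturbed \<delta> m y t) has_real_derivative nr y t + \<delta> * (2 * (m - y))) (at y)"
    if "R t < y" "y < L" for y
    using perturbed_deriv[OF t, of y \<delta> m] at_interior[OF that] that by simp
  have crit: "nr r t + \<delta> * (2 * (m - r)) = 0"
  proof (rule DERIV_local_max[OF dz[OF r]])
    show "0 < min (r - R t) (L - r)" using r by simp
    show "\<forall>y. \<bar>r - y\<bar> < min (r - R t) (L - r) \<longrightarrow> perturbed \<delta> m y t \<le> perturbed \<delta> m r t"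
      using max by (auto simp: abs_less_iff)
  qed
  then show "nr r t = 2 * \<delta> * (r - m)" by (simp add: algebra_simps)
  have "nrr r t - 2 * \<delta> \<le> 0"
  proof (rule interior_max_second_deriv[where f = "\<lambda>y. perturbed \<delta> m y t"
        and f' = "\<lambda>y. nr y t + \<delta> * (2 * (m - y))", OF r dz _ crit])
    show "((\<lambda>y. nr y t + \<delta> * (2 * (m - y))) has_real_derivative nrr r t - 2 * \<delta>) (at r)"
      using n_rr[OF rt] by (auto intro!: derivative_eq_intros)
  qed (use max in auto)
  then show "nrr r t \<le> 2 * \<delta>" by simp
qed

text \<open>An interior first touching point is impossible once delta is small against the bounds
  V for |v| and Rmin for r: the growth estimate makes dn/dt negative there.\<close>

lemma no_interior_touch:
  assumes rt: "(r, t) \<in> Omega_int R L T" and "0 < \<delta>" "0 < m" "m < L"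
    and "0 < Rmin" "Rmin \<le> r" and vV: "\<bar>v r t\<bar> \<le> V"
    and "0 < \<epsilon>" and high: "bound + \<epsilon> / 2 \<le> n r t"
    and small: "\<delta> * (2 * V * L + 2 * Dn * L / Rmin + 2 * Dn) < lamnn * \<epsilon> * nm / 2"
    and max: "\<And>y. R t \<le> y \<Longrightarrow> y \<le> L \<Longrightarrow> perturbed \<delta> m y t \<le> perturbed \<delta> m r t"
    and "0 < d" and earlier: "\<And>h. 0 < h \<Longrightarrow> h < d \<Longrightarrow> (r, t - h) \<in> Omega R L T \<and> n r (t - h) \<le> n r t"
  shows False
proof -
  note derivs = interior_max_derivatives[OF rt \<open>0 < \<delta>\<close> max \<open>0 < d\<close> earlier]
  have r: "R t < r" "r < L" and r0: "0 < r" using rt \<open>0 < Rmin\<close> \<open>Rmin \<le> r\<close> by auto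
  have nr_small: "\<bar>nr r t\<bar> \<le> 2 * \<delta> * L"
  proof -
    have "\<bar>r - m\<bar> \<le> L" using r0 r \<open>0 < m\<close> \<open>m < L\<close> by auto
    moreover have "\<bar>nr r t\<bar> = 2 * \<delta> * \<bar>r - m\<bar>" using derivs(2) \<open>0 < \<delta>\<close> by (simp add: abs_mult)
    ultimately show ?thesis using \<open>0 < \<delta>\<close> by (simp add: mult_left_mono)
  qed
  have "\<bar>v r t\<bar> * \<bar>nr r t\<bar> \<le> V * (2 * \<delta> * L)" using vV nr_small by (intro mult_mono) auto
  moreover have "Dn * \<bar>nr r t\<bar> / r \<le> Dn * (2 * \<delta> * L) / Rmin"
    using nr_small Dn_pos \<open>0 < Rmin\<close> \<open>Rmin \<le> r\<close> \<open>0 < \<delta>\<close> L_pos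
    by (intro frac_le mult_left_mono) auto
  moreover have "Dn * nrr r t \<le> Dn * (2 * \<delta>)" using derivs(3) Dn_pos by simp
  moreover have "\<delta> * (2 * V * L + 2 * Dn * L / Rmin + 2 * Dn)
      = V * (2 * \<delta> * L) + Dn * (2 * \<delta> * L) / Rmin + Dn * (2 * \<delta>)"
    by (simp add: algebra_simps)
  ultimately have perturbation:
    "\<bar>v r t\<bar> * \<bar>nr r t\<bar> + Dn * \<bar>nr r t\<bar> / r + Dn * nrr r t < lamnn * \<epsilon> * nm / 2"
    using small by linarith
  have "kn + \<beta> * (\<rho>m - 1) \<le> lamnn * bound" using bound_ge(2) lamnn_pos by (simp add: field_simps)
  moreover have "lamnn * (bound + \<epsilon> / 2) \<le> lamnn * n r t" using high lamnn_pos by simp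
  ultimately have "kn + \<beta> * (\<rho>m - 1) - lamnn * n r t \<le> - (lamnn * \<epsilon> / 2)"
    by (simp add: algebra_simps)
  then have "n r t * (kn + \<beta> * (\<rho>m - 1) - lamnn * n r t) \<le> n r t * - (lamnn * \<epsilon> / 2)"
    using high bound_ge(3) nm_pos \<open>0 < \<epsilon>\<close> by (intro mult_left_mono) auto
  also have "\<dots> \<le> nm * - (lamnn * \<epsilon> / 2)"
    using high bound_ge(3) lamnn_pos \<open>0 < \<epsilon>\<close> by (intro mult_right_mono_neg) auto
  finally have growth: "n r t * (kn + \<beta> * (\<rho>m - 1) - lamnn * n r t) \<le> - (lamnn * \<epsilon> * nm / 2)"
    by (simp add: mult.commute mult.left_commute)
  have "nm < n r t" "knb / lamnb \<le> n r t" using high bound_ge \<open>0 < \<epsilon>\<close> by auto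
  from nt_estimate[OF rt this] growth perturbation derivs(1) show False by linarith
qed

end

context density_problem
begin

lemma first_touch_point:
  assumes t1: "0 \<le> t1" "t1 < T" and Rm: "\<And>s. 0 \<le> s \<Longrightarrow> s \<le> t1 \<Longrightarrow> R s < m" and "m < L"
    and "0 < \<epsilon>" "0 < \<delta>" "\<delta> * L^2 \<le> \<epsilon> / 2"
    and q0: "(r0, t0) \<in> cylinder R L t1" "bound + \<epsilon> \<le> perturbed \<delta> m r0 t0"
  obtains rs ts where "0 < ts" "ts \<le> t1" "R ts \<le> rs" "rs \<le> L" "bound + \<epsilon> / 2 \<le> n rs ts"
    "\<And>y. R ts \<le> y \<Longrightarrow> y \<le> L \<Longrightarrow> perturbed \<delta> m y ts \<le> perturbed \<delta> m rs ts"
    "\<And>r s. (r, s) \<in> cylinder R L t1 \<Longrightarrow> s < ts \<Longrightarrow> perturbed \<delta> m r s < perturbed \<delta> m rs ts"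
proof -
  have R1: "continuous_on {0..t1} R" using R_cont_upto t1 .
  have K: "cylinder R L t1 \<subseteq> Omega R L T" using t1 by auto
  have z: "continuous_on (cylinder R L t1) (\<lambda>q. perturbed \<delta> m (fst q) (snd q))"
    unfolding perturbed_def bump_def
    by (intro continuous_intros continuous_on_subset[OF C1_on_continuous[OF n_C1] K])
  obtain r1 ts where hit: "(r1, ts) \<in> cylinder R L t1" "bound + \<epsilon> \<le> perturbed \<delta> m r1 ts"
    and before: "\<And>r s. (r, s) \<in> cylinder R L t1 \<Longrightarrow> s < ts \<Longrightarrow> perturbed \<delta> m r s < bound + \<epsilon>"
    using first_time_at_level[OF compact_cylinder[OF R1] z q0] by blast
  have ts: "0 \<le> ts" "ts \<le> t1" "R ts < L" using hit R_bounds[of ts] t1 by auto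
  have "{y. (y, ts) \<in> cylinder R L t1} = {R ts..L}" using ts by auto
  then have "continuous_on {R ts..L} (\<lambda>y. perturbed \<delta> m y ts)"
    using continuous_on_slice[OF z, of ts] by simp
  moreover have "{R ts..L} \<noteq> {}" using ts(3) by simp
  ultimately obtain rs where "rs \<in> {R ts..L}"
    and "\<forall>y\<in>{R ts..L}. perturbed \<delta> m y ts \<le> perturbed \<delta> m rs ts"
    using continuous_attains_sup[OF compact_Icc] by blast
  then have rs: "R ts \<le> rs" "rs \<le> L"
    and max: "\<And>y. R ts \<le> y \<Longrightarrow> y \<le> L \<Longrightarrow> perturbed \<delta> m y ts \<le> perturbed \<delta> m rs ts"
    by auto
  have level: "bound + \<epsilon> \<le> perturbed \<delta> m rs ts" using max[of r1] hit by auto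
  have "0 < R ts" "R ts < m" using R_bounds[of ts] Rm[of ts] ts t1 by auto
  then have "bump L m rs \<le> L^2" using bump_bounds[of m L rs] rs \<open>m < L\<close> by simp
  then have "\<delta> * bump L m rs \<le> \<delta> * L^2" using \<open>0 < \<delta>\<close> by simp
  then have "\<delta> * bump L m rs \<le> \<epsilon> / 2" using \<open>\<delta> * L^2 \<le> \<epsilon> / 2\<close> by linarith
  then have high: "bound + \<epsilon> / 2 \<le> n rs ts" using level unfolding perturbed_def by simp
  have "0 < ts"
  proof (rule ccontr)
    assume "\<not> 0 < ts"
    then have "n rs ts = 0" using ts(1) n_init rs by simp
    then show False using high bound_ge(3) nm_pos \<open>0 < \<epsilon>\<close> by simp
  qed
  have below: "perturbed \<delta> m r s < perturbed \<delta> m rs ts" if "(r, s) \<in> cylinder R L t1" "s < ts" for r s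
    using before[OF that] level by linarith
  show thesis using that[OF \<open>0 < ts\<close> ts(2) rs high max below] .
qed

text \<open>A first touching point would have to lie on the free boundary, on r = L or in the
  interior, and each of these is excluded above.\<close>

lemma no_level_crossing:
  assumes t1: "0 \<le> t1" "t1 < T"
    and margins: "0 < Rmin" "m < L" "\<And>s. 0 \<le> s \<Longrightarrow> s \<le> t1 \<Longrightarrow> Rmin \<le> R s \<and> R s < m"
    and V: "\<And>r s. (r, s) \<in> cylinder R L t1 \<Longrightarrow> \<bar>v r s\<bar> \<le> V"
    and "0 < \<epsilon>" "0 < \<delta>" "\<delta> * L^2 \<le> \<epsilon> / 2"
    and small: "\<delta> * (2 * V * L + 2 * Dn * L / Rmin + 2 * Dn) < lamnn * \<epsilon> * nm / 2"
    and q0: "(r0, t0) \<in> cylinder R L t1"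
  shows "perturbed \<delta> m r0 t0 < bound + \<epsilon>"
proof (rule ccontr)
  assume "\<not> perturbed \<delta> m r0 t0 < bound + \<epsilon>"
  then have level: "bound + \<epsilon> \<le> perturbed \<delta> m r0 t0" by simp
  obtain rs ts where ts: "0 < ts" "ts \<le> t1" and rs: "R ts \<le> rs" "rs \<le> L"
    and high: "bound + \<epsilon> / 2 \<le> n rs ts"
    and max: "\<And>y. R ts \<le> y \<Longrightarrow> y \<le> L \<Longrightarrow> perturbed \<delta> m y ts \<le> perturbed \<delta> m rs ts"
    and before: "\<And>r s. (r, s) \<in> cylinder R L t1 \<Longrightarrow> s < ts \<Longrightarrow> perturbed \<delta> m r s < perturbed \<delta> m rs ts"
  proof (rule first_touch_point[OF t1 _ margins(2) \<open>0 < \<epsilon>\<close> \<open>0 < \<delta>\<close> \<open>\<delta> * L^2 \<le> \<epsilon> / 2\<close> q0 level])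
    show "\<And>s. 0 \<le> s \<Longrightarrow> s \<le> t1 \<Longrightarrow> R s < m" using margins(3) by auto
  qed (rule that)
  have tsT: "ts < T" and Rm: "Rmin \<le> R ts" "R ts < m" and "0 < R ts"
    using ts t1 margins(3)[of ts] R_bounds[of ts] by auto
  have above: "nm < n rs ts" using high bound_ge(3) \<open>0 < \<epsilon>\<close> by linarith
  consider "rs = R ts" | "rs = L" | "R ts < rs" "rs < L" using rs by fastforce
  then show False
  proof cases
    case 1
    then show False using no_max_at_inner_boundary[OF ts(1) tsT \<open>0 < \<delta>\<close> Rm(2)] max by simp
  next
    case 2
    then show False using no_max_at_outer_boundary[OF ts(1) tsT \<open>0 < \<delta>\<close> margins(2)] above max by simp
  next
    case 3
    have R1: "continuous_on {0..t1} R" using R_cont_upto t1 .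
    obtain d where "0 < d" and d: "\<And>h. 0 < h \<Longrightarrow> h < d \<Longrightarrow> 0 \<le> ts - h \<and> R (ts - h) < rs"
      using right_of_boundary_earlier[OF R1 ts 3(1)] by blast
    have earlier: "(rs, ts - h) \<in> Omega R L T \<and> n rs (ts - h) \<le> n rs ts" if "0 < h" "h < d" for h
    proof -
      have "(rs, ts - h) \<in> cylinder R L t1" using d[OF that] that ts rs by auto
      then show ?thesis using before[of rs "ts - h"] that t1 unfolding perturbed_def by auto
    qed
    show False
    proof (rule no_interior_touch[OF _ \<open>0 < \<delta>\<close> _ margins(2) margins(1) _ V \<open>0 < \<epsilon>\<close> high small max
          \<open>0 < d\<close> earlier])
      show "(rs, ts) \<in> Omega_int R L T" using 3 ts tsT by simp
      show "0 < m" "Rmin \<le> rs" "(rs, ts) \<in> cylinder R L t1" using Rm \<open>0 < R ts\<close> 3 ts by auto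
    qed
  qed
qed

lemma density_upper_bound:
  assumes rt: "(r, t) \<in> Omega R L T"
  shows "n r t \<le> bound"
proof (rule field_le_epsilon)
  fix \<epsilon> :: real assume "0 < \<epsilon>"
  have t: "0 \<le> t" "t < T" using rt by auto
  have R1: "continuous_on {0..t} R" using R_cont_upto t .
  have "\<And>s. 0 \<le> s \<Longrightarrow> s \<le> t \<Longrightarrow> 0 < R s \<and> R s < L" using R_bounds t by simp
  then obtain Rmin m where margins: "0 < Rmin" "m < L" "\<And>s. 0 \<le> s \<Longrightarrow> s \<le> t \<Longrightarrow> Rmin \<le> R s \<and> R s < m"
    using boundary_margins[OF R1 t(1)] by blast
  have "continuous_on (cylinder R L t) (\<lambda>q. v (fst q) (snd q))"
    by (rule continuous_on_subset[OF v_cont]) (use t in auto)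
  then obtain V where "0 < V" and V: "\<And>r s. (r, s) \<in> cylinder R L t \<Longrightarrow> \<bar>v r s\<bar> \<le> V"
    using bounded_on_cylinder[OF R1] by blast
  have "0 < L^2" "0 < \<epsilon> / 2" using L_pos \<open>0 < \<epsilon>\<close> by auto
  moreover have "0 < 2 * V * L + 2 * Dn * L / Rmin + 2 * Dn"
    using \<open>0 < V\<close> L_pos Dn_pos margins(1) by (simp add: add_pos_pos)
  moreover have "0 < lamnn * \<epsilon> * nm / 2" using \<open>0 < \<epsilon>\<close> lamnn_pos nm_pos by simp
  ultimately obtain \<delta> where "0 < \<delta>" and small_L: "\<delta> * L^2 \<le> \<epsilon> / 2"
    and small_C: "\<delta> * (2 * V * L + 2 * Dn * L / Rmin + 2 * Dn) < lamnn * \<epsilon> * nm / 2"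
    using small_factor by metis
  have "perturbed \<delta> m r t < bound + \<epsilon>"
    by (rule no_level_crossing[OF t margins V \<open>0 < \<epsilon>\<close> \<open>0 < \<delta>\<close> small_L small_C])
      (use rt in auto)
  moreover have "0 \<le> \<delta> * bump L m r"
  proof -
    have "0 < R t" "R t < m" "R t \<le> r" "r \<le> L" using R_bounds[OF t] margins(3)[of t] rt t by auto
    then show ?thesis using bump_bounds[of m L r] \<open>0 < \<delta>\<close> margins(2) by simp
  qed
  ultimately show "n r t \<le> bound + \<epsilon>" unfolding perturbed_def by linarith
qed

end

text \<open>The hypotheses of the theorem contain those of density_problem (the free boundary is
  continuous as it is differentiable, and rho is continuous as it is C1), so the bound follows
  by interpreting the locale.\<close>

theorem lemma4p5:
  fixes L R0 \<beta> T \<rho>m :: real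
    and R :: "real \<Rightarrow> real"
    and \<rho> \<rho>r \<rho>t v vr vrr Pr b e er err n nr nt nrr Fr :: "real \<Rightarrow> real \<Rightarrow> real"
    and \<gamma> Dn \<chi>n nm knb kn lamnb lamnn ksg :: real
  defines "\<Omega> \<equiv> Omega R L T"
  defines "\<Omega>i \<equiv> Omega_int R L T"
  assumes L_pos: "L > 0" and R0: "0 < R0" "R0 < L" and \<beta>_pos: "\<beta> > 0" and T_pos: "T > 0"
  \<comment> \<open>free boundary R in C^1([0,T)), R(0)=R0, 0<R(t)<L, dR/dt = v(R(t),t)\<close>
    and R_init: "R 0 = R0"
    and R_bounds: "\<And>t. 0 \<le> t \<Longrightarrow> t < T \<Longrightarrow> 0 < R t \<and> R t < L"
    and R_deriv: "\<And>t. 0 \<le> t \<Longrightarrow> t < T \<Longrightarrow>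
        (R has_real_derivative v (R t) t) (at t within {0..<T})"
    and R_C1: "continuous_on {0..<T} (\<lambda>t. v (R t) t)"
  \<comment> \<open>matrix density rho: classical, 0 <= rho < rho_m, rho_m > 1\<close>
    and \<rho>m_gt: "\<rho>m > 1"
    and \<rho>_C1: "C1_on \<Omega> \<rho> \<rho>r \<rho>t"
    and \<rho>_bounds: "\<And>r t. (r, t) \<in> \<Omega> \<Longrightarrow> 0 \<le> \<rho> r t \<and> \<rho> r t < \<rho>m"
  \<comment> \<open>velocity v: classical, twice continuously differentiable in r\<close>
    and v_cont: "continuous_on \<Omega> (\<lambda>q. v (fst q) (snd q))"
    and v_r: "\<And>r t. (r, t) \<in> \<Omega> \<Longrightarrow>
        ((\<lambda>y. v y t) has_real_derivative vr r t) (at r within {R t..L})"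
    and v_rr: "\<And>r t. (r, t) \<in> \<Omega> \<Longrightarrow>
        ((\<lambda>y. vr y t) has_real_derivative vrr r t) (at r within {R t..L})"
    and vr_cont: "continuous_on \<Omega> (\<lambda>q. vr (fst q) (snd q))"
    and vrr_cont: "continuous_on \<Omega> (\<lambda>q. vrr (fst q) (snd q))"
    and P_r: "\<And>r t. 0 \<le> t \<Longrightarrow> t < T \<Longrightarrow> R t < r \<Longrightarrow> r < L \<Longrightarrow>
        ((\<lambda>y. Pfun \<beta> (\<rho> y t)) has_real_derivative Pr r t) (at r)"
    and v_eq: "\<And>r t. 0 \<le> t \<Longrightarrow> t < T \<Longrightarrow> R t < r \<Longrightarrow> r < L \<Longrightarrow>
        vrr r t + vr r t / r - v r t / r ^ 2 = Pr r t"
    and v_bc_L: "\<And>t. 0 \<le> t \<Longrightarrow> t < T \<Longrightarrow> v L t = 0"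
    and v_bc_R: "\<And>t. 0 \<le> t \<Longrightarrow> t < T \<Longrightarrow> vr (R t) t = Pfun \<beta> (\<rho> (R t) t)"
  \<comment> \<open>b, e: given nonnegative continuous functions; e twice differentiable in r\<close>
    and b_cont: "continuous_on \<Omega> (\<lambda>q. b (fst q) (snd q))"
    and b_nonneg: "\<And>r t. (r, t) \<in> \<Omega> \<Longrightarrow> b r t \<ge> 0"
    and e_cont: "continuous_on \<Omega> (\<lambda>q. e (fst q) (snd q))"
    and e_nonneg: "\<And>r t. (r, t) \<in> \<Omega> \<Longrightarrow> e r t \<ge> 0"
    and e_r: "\<And>r t. (r, t) \<in> \<Omega> \<Longrightarrow>
        ((\<lambda>y. e y t) has_real_derivative er r t) (at r within {R t..L})"
    and er_cont: "continuous_on \<Omega> (\<lambda>q. er (fst q) (snd q))"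
    and e_rr: "\<And>r t. (r, t) \<in> \<Omega>i \<Longrightarrow>
        ((\<lambda>y. er y t) has_real_derivative err r t) (at r)"
    and err_cont: "continuous_on \<Omega>i (\<lambda>q. err (fst q) (snd q))"
  \<comment> \<open>parameters\<close>
    and \<gamma>_range: "0 \<le> \<gamma>" "\<gamma> \<le> 1"
    and consts_pos: "Dn > 0" "\<chi>n > 0" "nm > 0" "knb > 0" "kn > 0" "lamnb > 0" "lamnn > 0" "ksg > 0"
  \<comment> \<open>n: nonnegative classical solution\<close>
    and n_C1: "C1_on \<Omega> n nr nt"
    and n_rr: "\<And>r t. (r, t) \<in> \<Omega>i \<Longrightarrow>
        ((\<lambda>y. nr y t) has_real_derivative nrr r t) (at r)"
    and nrr_cont: "continuous_on \<Omega>i (\<lambda>q. nrr (fst q) (snd q))"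
    and n_nonneg: "\<And>r t. (r, t) \<in> \<Omega> \<Longrightarrow> n r t \<ge> 0"
    and flux_r: "\<And>r t. (r, t) \<in> \<Omega>i \<Longrightarrow>
        ((\<lambda>y. y * v y t * n y t - y * Dn * nr y t
              + y * \<chi>n * \<rho> y t * n y t * Hfun (1 - n y t / nm) * Phi ksg (er y t))
           has_real_derivative Fr r t) (at r)"
    and n_pde: "\<And>r t. (r, t) \<in> \<Omega>i \<Longrightarrow>
        nt r t + Fr r t / r
          = knb * b r t * (e r t / (1 + e r t)) + kn * n r t * (e r t / (1 + e r t))
            - lamnb * n r t * b r t - lamnn * (n r t) ^ 2"
    and n_bc_L: "\<And>t. 0 < t \<Longrightarrow> t < T \<Longrightarrow>
        (1 - \<gamma>) * n L t + \<gamma> * L * (nr L t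
           - \<chi>n / Dn * \<rho> L t * n L t * Hfun (1 - n L t / nm) * Phi ksg (er L t)) = 0"
    and n_bc_R: "\<And>t. 0 < t \<Longrightarrow> t < T \<Longrightarrow> nr (R t) t = 0"
    and n_init: "\<And>r. R0 \<le> r \<Longrightarrow> r \<le> L \<Longrightarrow> n r 0 = 0"
  shows "\<forall>(r, t) \<in> \<Omega>. 0 \<le> n r t \<and>
           n r t \<le> max (knb / lamnb) (max ((kn + \<beta> * (\<rho>m - 1)) / lamnn) nm)"
proof -
  have R_cont: "continuous_on {0..<T} R"
    unfolding continuous_on_eq_continuous_within
  proof
    fix t assume "t \<in> {0..<T}"
    then show "continuous (at t within {0..<T}) R" using DERIV_continuous[OF R_deriv[of t]] by auto
  qed
  have \<rho>_below: "\<And>r t. (r, t) \<in> Omega R L T \<Longrightarrow> \<rho> r t < \<rho>m"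
    using \<rho>_bounds unfolding \<Omega>_def by blast
  have n_init': "\<And>r. R 0 \<le> r \<Longrightarrow> r \<le> L \<Longrightarrow> n r 0 = 0" using n_init R_init by simp
  note hyps = L_pos R_bounds R_cont less_imp_le[OF \<beta>_pos] less_imp_le[OF \<rho>m_gt]
    C1_on_continuous[OF \<rho>_C1] \<rho>_below v_cont vr_cont v_r v_rr P_r v_eq v_bc_L v_bc_R
    b_nonneg e_nonneg \<gamma>_range consts_pos less_imp_le[OF consts_pos(4)] less_imp_le[OF consts_pos(5)]
    n_C1 n_rr flux_r n_pde n_bc_L n_bc_R n_init'
  interpret density_problem L T \<beta> \<rho>m \<gamma> Dn \<chi>n nm knb kn lamnb lamnn ksg R
      \<rho> v vr vrr Pr b e er n nr nt nrr Fr
    by unfold_locales (fact hyps[unfolded \<Omega>_def \<Omega>i_def])+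
  show ?thesis
    using density_upper_bound n_nonneg unfolding \<Omega>_def bound_def by auto
qed

end
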